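(* Let $\Phi\in\mathcal{G}_0$ and suppose that $\Phi$ extends holomorphically to a mapping $\mathbb{C}_0\to\mathbb{C}_{\frac12+\epsilon}$ for some $\epsilon>0$. Then $D_\Phi f=f'\circ\Phi$ defines a bounded operator on $\mathcal{H}^2$.
   Context: $\mathbb{C}_\theta=\{s:\Re s>\theta\}$. $\mathcal{H}^2$ is the Hilbert space of Dirichlet series $f(s)=\sum_{n\ge1}a_nn^{-s}$ with $\|f\|_{\mathcal{H}^2}^2=\sum_n|a_n|^2<\infty$. $\mathcal{G}_0$ is the class of maps $\Phi(s)=\sum_{n\ge1}c_nn^{-s}$ where the series converges uniformly in $\mathbb{C}_\eta$ for every $\eta>0$ and $\Phi(\mathbb{C}_0)\subset\mathbb{C}_{1/2}$. *)

theory Defs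
  imports "HOL-Analysis.Analysis"
begin

text \<open>Dirichlet series with coefficient sequence a (indexed from n = 1; a 0 is ignored):
  f(s) = sum_{n>=1} a_n n^{-s}.\<close>
definition dseries :: "(nat \<Rightarrow> complex) \<Rightarrow> complex \<Rightarrow> complex" where
  "dseries a s = (\<Sum>n. a (Suc n) * of_nat (Suc n) powr (- s))"

definition dpartial :: "(nat \<Rightarrow> complex) \<Rightarrow> nat \<Rightarrow> complex \<Rightarrow> complex" where
  "dpartial a N s = (\<Sum>n<N. a (Suc n) * of_nat (Suc n) powr (- s))"

definition halfplane :: "real \<Rightarrow> complex set" where
  "halfplane \<theta> = {s. Re s > \<theta>}"

text \<open>The Hardy space H^2 of Dirichlet series, via coefficient sequences.\<close>
definition H2 :: "(nat \<Rightarrow> complex) set" where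
  "H2 = {a. summable (\<lambda>n. (cmod (a (Suc n)))\<^sup>2)}"

definition H2_norm :: "(nat \<Rightarrow> complex) \<Rightarrow> real" where
  "H2_norm a = sqrt (\<Sum>n. (cmod (a (Suc n)))\<^sup>2)"

text \<open>The class G_0 (coefficient sequence c of Phi).\<close>
definition G0 :: "(nat \<Rightarrow> complex) \<Rightarrow> bool" where
  "G0 c \<longleftrightarrow>
     (\<forall>\<eta>>0. uniform_limit (halfplane \<eta>) (dpartial c) (dseries c) sequentially) \<and>
     dseries c ` halfplane 0 \<subseteq> halfplane (1/2)"

end

theory Submission
  imports Defs
begin

text \<open>For \<open>\<lambda> \<ge> 0\<close> the function \<open>exp (- \<lambda> \<Phi>)\<close> is a Dirichlet series bounded by
  \<open>exp (- \<lambda> (1/2 + \<epsilon>))\<close> on \<open>Re s > 0\<close>. On each vertical line the square sum of the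
  coefficients of a Dirichlet polynomial is a mean value of its squared modulus (Bohr), so the
  coefficient sequence \<open>g \<lambda>\<close> of \<open>exp (- \<lambda> \<Phi>)\<close> has \<open>H\<^sup>2\<close> norm at most
  \<open>exp (- \<lambda> (1/2 + \<epsilon>))\<close>. Expanding \<open>f' (\<Phi> s) = \<Sum>n. a n * (- log n) * exp (- log n * \<Phi> s)\<close>
  exhibits \<open>f' \<circ> \<Phi>\<close> as the Dirichlet series with coefficients
  \<open>\<Sum>n. a n * (- log n) * g (log n)\<close>, whose norm is at most
  \<open>\<Sum>n. |a n| * log n * n powr (-1/2 - \<epsilon>) \<le> C * \<parallel>a\<parallel>\<close> by Minkowski and Cauchy-Schwarz.\<close>

section \<open>Mean values of exponential polynomials\<close>

lemma Cesaro_mean_geometric_tendsto_0: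
  fixes z :: complex
  assumes "z \<noteq> 1" "cmod z = 1"
  shows "(\<lambda>J. (1 / of_nat J) * (\<Sum>j<J. z ^ j)) \<longlonglongrightarrow> 0"
proof (rule Lim_null_comparison)
  show "\<forall>\<^sub>F J in sequentially. norm ((1 / of_nat J) * (\<Sum>j<J. z ^ j)) \<le> (2 / cmod (1 - z)) * (1 / real J)"
  proof (intro always_eventually allI)
    fix J :: nat
    have "norm (\<Sum>j<J. z ^ j) = cmod (1 - z^J) / cmod (1 - z)"
      using assms(1) by (simp add: sum_gp_strict norm_divide)
    also have "cmod (1 - z^J) \<le> 2"
      using norm_triangle_ineq4[of 1 "z^J"] assms(2) by (simp add: norm_power)
    hence "cmod (1 - z^J) / cmod (1 - z) \<le> 2 / cmod (1 - z)"
      by (intro divide_right_mono) auto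
    finally have "norm (\<Sum>j<J. z ^ j) \<le> 2 / cmod (1 - z)" .
    hence "(1 / real J) * norm (\<Sum>j<J. z ^ j) \<le> (1 / real J) * (2 / cmod (1 - z))"
      by (intro mult_left_mono) auto
    thus "norm ((1 / of_nat J) * (\<Sum>j<J. z ^ j)) \<le> (2 / cmod (1 - z)) * (1 / real J)"
      by (simp add: norm_mult norm_divide mult.commute)
  qed
  show "(\<lambda>J. 2 / cmod (1 - z) * (1 / real J)) \<longlonglongrightarrow> 0"
    by (intro tendsto_mult_right_zero lim_const_over_n)
qed

lemma Cesaro_mean_exp_tendsto:
  assumes "\<bar>x\<bar> < 2 * pi"
  shows "(\<lambda>J. (1 / of_nat J) * (\<Sum>j<J. exp (\<i> * of_real x) ^ j)) \<longlonglongrightarrow> (if x = 0 then 1 else 0)"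
proof (cases "x = 0")
  case True
  have "\<forall>\<^sub>F J in sequentially. (1 / of_nat J) * (\<Sum>j<J. exp (\<i> * of_real x) ^ j) = 1"
    using eventually_gt_at_top[of "0::nat"] by eventually_elim (simp add: True)
  thus ?thesis using True by (simp add: tendsto_eventually)
next
  case False
  have "exp (\<i> * of_real x) \<noteq> 1"
  proof
    assume "exp (\<i> * of_real x) = 1"
    then obtain n :: int where n: "x = of_int (2 * n) * pi"
      unfolding exp_eq_1 by auto
    with False have "n \<noteq> 0" by auto
    hence "\<bar>of_int (2 * n) * pi\<bar> \<ge> 2 * pi" by (simp add: abs_mult)
    with assms n show False by simp
  qed
  thus ?thesis using False Cesaro_mean_geometric_tendsto_0 by simp
qed

lemma norm_exp_poly_squared:
  fixes e :: "'i \<Rightarrow> complex" and f :: "'i \<Rightarrow> real"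
  shows "of_real ((cmod (\<Sum>m\<in>M. e m * exp (\<i> * of_real (t * f m))))\<^sup>2)
           = (\<Sum>m\<in>M. \<Sum>k\<in>M. e m * cnj (e k) * exp (\<i> * of_real (t * (f m - f k))))"
proof -
  let ?P = "\<Sum>m\<in>M. e m * exp (\<i> * of_real (t * f m))"
  have "of_real ((cmod ?P)\<^sup>2) = ?P * cnj ?P" by (rule complex_norm_square)
  also have "\<dots> = (\<Sum>m\<in>M. \<Sum>k\<in>M. (e m * exp (\<i> * of_real (t * f m))) * cnj (e k * exp (\<i> * of_real (t * f k))))"
    unfolding cnj_sum sum_distrib_right sum_distrib_left by (subst sum.swap) simp
  also have "\<dots> = (\<Sum>m\<in>M. \<Sum>k\<in>M. e m * cnj (e k) * exp (\<i> * of_real (t * (f m - f k))))"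
  proof (intro sum.cong refl)
    fix m k
    have "cnj (exp (\<i> * of_real (t * f k))) = exp (- (\<i> * of_real (t * f k)))"
      by (simp add: exp_cnj)
    moreover have "exp (\<i> * of_real (t * f m)) * exp (- (\<i> * of_real (t * f k))) = exp (\<i> * of_real (t * (f m - f k)))"
      by (simp add: exp_add[symmetric] algebra_simps)
    ultimately show "(e m * exp (\<i> * of_real (t * f m))) * cnj (e k * exp (\<i> * of_real (t * f k))) = e m * cnj (e k) * exp (\<i> * of_real (t * (f m - f k)))"
      by (simp add: mult_ac)
  qed
  finally show ?thesis .
qed

text \<open>Averaging \<open>|P|\<^sup>2\<close> over the progression \<open>t = j \<tau>\<close>, with \<open>\<tau>\<close> so small that no
  frequency difference \<open>\<tau> (f m - f k)\<close> reaches \<open>2\<pi>\<close>, kills all cross terms in the limit.\<close>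

lemma sum_sq_norm_le_if_exp_poly_bounded:
  fixes e :: "'i \<Rightarrow> complex" and f :: "'i \<Rightarrow> real"
  assumes M: "finite M" and inj: "inj_on f M"
    and bnd: "\<And>t. cmod (\<Sum>m\<in>M. e m * exp (\<i> * of_real (t * f m))) \<le> B"
  shows "(\<Sum>m\<in>M. (cmod (e m))\<^sup>2) \<le> B\<^sup>2"
proof -
  define P where "P t = (\<Sum>m\<in>M. e m * exp (\<i> * of_real (t * f m)))" for t
  define L where "L = (\<Sum>m\<in>M. \<Sum>k\<in>M. \<bar>f m - f k\<bar>)"
  have L0: "L \<ge> 0" unfolding L_def by (intro sum_nonneg) auto
  define \<tau> where "\<tau> = 1 / (L + 1)"
  define A where "A J m k = (1 / of_nat J) * (\<Sum>j<J. exp (\<i> * of_real (\<tau> * (f m - f k))) ^ j)" for J m k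
  have mean: "(\<Sum>m\<in>M. \<Sum>k\<in>M. e m * cnj (e k) * A J m k)
                = of_real ((1 / real J) * (\<Sum>j<J. (cmod (P (real j * \<tau>)))\<^sup>2))" for J
  proof -
    have pow: "exp (\<i> * of_real (\<tau> * (f m - f k))) ^ j = exp (\<i> * of_real (real j * \<tau> * (f m - f k)))" for m k j
      by (simp add: exp_of_nat_mult[symmetric] algebra_simps)
    have "of_real ((1 / real J) * (\<Sum>j<J. (cmod (P (real j * \<tau>)))\<^sup>2))
            = (1 / of_nat J) * (\<Sum>j<J. of_real ((cmod (P (real j * \<tau>)))\<^sup>2) :: complex)"
      by simp
    also have "\<dots> = (1 / of_nat J) * (\<Sum>j<J. \<Sum>m\<in>M. \<Sum>k\<in>M. e m * cnj (e k) * exp (\<i> * of_real (\<tau> * (f m - f k))) ^ j)"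
      unfolding P_def norm_exp_poly_squared pow ..
    also have "\<dots> = (\<Sum>m\<in>M. \<Sum>k\<in>M. e m * cnj (e k) * A J m k)"
      unfolding A_def sum_distrib_left
      by (subst sum.swap, rule sum.cong[OF refl], subst sum.swap) (simp add: sum_distrib_left mult_ac)
    finally show ?thesis by simp
  qed
  have "(\<lambda>J. \<Sum>m\<in>M. \<Sum>k\<in>M. e m * cnj (e k) * A J m k)
          \<longlonglongrightarrow> (\<Sum>m\<in>M. \<Sum>k\<in>M. e m * cnj (e k) * (if f m - f k = 0 then 1 else 0))"
  proof (intro tendsto_intros)
    fix m k assume mk: "m \<in> M" "k \<in> M"
    have "\<bar>f m - f k\<bar> \<le> (\<Sum>k\<in>M. \<bar>f m - f k\<bar>)"
      using M mk by (intro member_le_sum) auto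
    also have "\<dots> \<le> L" unfolding L_def using M mk by (intro member_le_sum sum_nonneg) auto
    finally have "\<bar>f m - f k\<bar> / (L + 1) < 1" using L0 by simp
    moreover have "\<bar>\<tau> * (f m - f k)\<bar> = \<bar>f m - f k\<bar> / (L + 1)"
      using L0 by (simp add: \<tau>_def abs_mult)
    ultimately have "\<bar>\<tau> * (f m - f k)\<bar> < 2 * pi" using pi_gt3 by simp
    from Cesaro_mean_exp_tendsto[OF this]
    show "(\<lambda>J. A J m k) \<longlonglongrightarrow> (if f m - f k = 0 then 1 else 0)"
      using L0 by (simp add: A_def \<tau>_def)
  qed
  also have "(\<Sum>m\<in>M. \<Sum>k\<in>M. e m * cnj (e k) * (if f m - f k = 0 then 1 else 0)) = of_real (\<Sum>m\<in>M. (cmod (e m))\<^sup>2)"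
  proof -
    have "f m - f k = 0 \<longleftrightarrow> m = k" if "m \<in> M" "k \<in> M" for m k
      using inj that by (auto dest: inj_onD)
    hence "(\<Sum>m\<in>M. \<Sum>k\<in>M. e m * cnj (e k) * (if f m - f k = 0 then 1 else 0))
             = (\<Sum>m\<in>M. \<Sum>k\<in>M. e m * cnj (e k) * (if m = k then 1 else 0))"
      by (intro sum.cong refl) auto
    thus ?thesis
      using M by (simp add: if_distrib cong: if_cong) (simp add: complex_norm_square[symmetric])
  qed
  finally have "(\<lambda>J. (1 / real J) * (\<Sum>j<J. (cmod (P (real j * \<tau>)))\<^sup>2)) \<longlonglongrightarrow> (\<Sum>m\<in>M. (cmod (e m))\<^sup>2)"
    unfolding mean using tendsto_Re by fastforce
  moreover have "\<forall>\<^sub>F J in sequentially. (1 / real J) * (\<Sum>j<J. (cmod (P (real j * \<tau>)))\<^sup>2) \<le> B\<^sup>2"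
    using eventually_gt_at_top[of "0::nat"]
  proof eventually_elim
    case (elim J)
    have B0: "B \<ge> 0" using bnd[of 0] norm_ge_zero order_trans by blast
    have "(\<Sum>j<J. (cmod (P (real j * \<tau>)))\<^sup>2) \<le> (\<Sum>j<J. B\<^sup>2)"
      by (intro sum_mono power_mono) (auto simp only: P_def bnd norm_ge_zero)
    thus ?case using elim by (simp add: field_simps)
  qed
  ultimately show ?thesis by (intro tendsto_le[OF _ tendsto_const]) auto
qed
section \<open>Dirichlet series with square summable coefficients\<close>

text \<open>\<open>inv_powr m s\<close> is \<open>m powr (- s)\<close>, written via \<open>exp\<close> so that it is multiplicative
  without side conditions on \<open>powr\<close>.\<close>

definition inv_powr :: "nat \<Rightarrow> complex \<Rightarrow> complex" where
  "inv_powr m s = exp (- s * of_real (ln (real m)))"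

lemma of_nat_powr_neg_eq_inv_powr: "m > 0 \<Longrightarrow> of_nat m powr (- s) = inv_powr m s"
  by (simp add: powr_def inv_powr_def mult_ac)

lemma norm_inv_powr: "cmod (inv_powr m s) = exp (- Re s * ln (real m))"
  by (simp add: inv_powr_def)

lemma inv_powr_1 [simp]: "inv_powr 1 s = 1" "inv_powr (Suc 0) s = 1"
  by (simp_all add: inv_powr_def)

lemma inv_powr_mult: "m > 0 \<Longrightarrow> n > 0 \<Longrightarrow> inv_powr (m * n) s = inv_powr m s * inv_powr n s"
  by (simp add: inv_powr_def ln_mult exp_add[symmetric] algebra_simps)

lemma inv_powr_prod:
  assumes "finite I" "\<And>i. i \<in> I \<Longrightarrow> g i > 0"
  shows "inv_powr (prod g I) s = (\<Prod>i\<in>I. inv_powr (g i) s)"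
  using assms
proof (induction I rule: finite_induct)
  case (insert x F)
  have "prod g F > 0" using insert by (intro prod_pos) auto
  thus ?case using insert by (simp add: inv_powr_mult)
qed simp

lemma inv_powr_vertical_line:
  "inv_powr m (of_real \<eta> + \<i> * of_real t)
     = of_real (exp (- \<eta> * ln (real m))) * exp (\<i> * of_real (t * (- ln (real m))))"
  by (simp add: inv_powr_def exp_add[symmetric] exp_of_real[symmetric] algebra_simps)

lemma dseries_eq_suminf_inv_powr: "dseries a s = (\<Sum>n. a (Suc n) * inv_powr (Suc n) s)"
  unfolding dseries_def by (simp add: of_nat_powr_neg_eq_inv_powr del: of_nat_Suc)

lemmas sum_atLeast1_atMost_eq = sum.atLeast1_atMost_eq[unfolded One_nat_def[symmetric]]

lemma dpartial_eq_sum_inv_powr: "dpartial a N s = (\<Sum>m\<in>{1..N}. a m * inv_powr m s)"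
  unfolding dpartial_def sum_atLeast1_atMost_eq
  by (simp add: of_nat_powr_neg_eq_inv_powr del: of_nat_Suc)

lemma dpartial_tendsto_dseries:
  assumes "summable (\<lambda>n. a (Suc n) * inv_powr (Suc n) s)"
  shows "(\<lambda>N. dpartial a N s) \<longlonglongrightarrow> dseries a s"
  unfolding dpartial_eq_sum_inv_powr sum_atLeast1_atMost_eq dseries_eq_suminf_inv_powr
  by (rule summable_LIMSEQ[OF assms])

lemma H2_norm_nonneg: "a \<in> H2 \<Longrightarrow> H2_norm a \<ge> 0"
  unfolding H2_def H2_norm_def by (simp add: suminf_nonneg)

lemma H2_norm_squared:
  assumes "a \<in> H2"
  shows "(H2_norm a)\<^sup>2 = (\<Sum>n. (cmod (a (Suc n)))\<^sup>2)"
proof -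
  have "(\<Sum>n. (cmod (a (Suc n)))\<^sup>2) \<ge> 0"
    using assms by (intro suminf_nonneg) (auto simp: H2_def)
  thus ?thesis by (simp add: H2_norm_def)
qed

lemma H2_of_partial_sums_bounded:
  assumes "\<And>K. (\<Sum>n<K. (cmod (a (Suc n)))\<^sup>2) \<le> B"
  shows "a \<in> H2" and "(H2_norm a)\<^sup>2 \<le> B"
proof -
  show a: "a \<in> H2" unfolding mem_Collect_eq H2_def
  proof (rule bounded_imp_summable)
    show "(\<Sum>k\<le>n. (cmod (a (Suc k)))\<^sup>2) \<le> B" for n
      using assms[of "Suc n"] unfolding lessThan_Suc_atMost .
  qed simp
  show "(H2_norm a)\<^sup>2 \<le> B"
    using a suminf_le_const[of "\<lambda>n. (cmod (a (Suc n)))\<^sup>2" B] assms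
    by (simp add: H2_norm_squared H2_def)
qed

lemma Cauchy_Schwarz_ineq_sum_sqrt:
  fixes f g :: "'a \<Rightarrow> real"
  shows "(\<Sum>i\<in>A. f i * g i) \<le> sqrt (\<Sum>i\<in>A. (f i)\<^sup>2) * sqrt (\<Sum>i\<in>A. (g i)\<^sup>2)"
proof -
  have "(\<Sum>i\<in>A. f i * g i)\<^sup>2 \<le> (\<Sum>i\<in>A. (f i)\<^sup>2) * (\<Sum>i\<in>A. (g i)\<^sup>2)"
    by (rule Cauchy_Schwarz_ineq_sum)
  hence "(\<Sum>i\<in>A. f i * g i) \<le> sqrt ((\<Sum>i\<in>A. (f i)\<^sup>2) * (\<Sum>i\<in>A. (g i)\<^sup>2))"
    by (rule real_le_rsqrt)
  thus ?thesis by (simp add: real_sqrt_mult)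
qed

lemma Cauchy_Schwarz_suminf:
  fixes x y :: "nat \<Rightarrow> real"
  assumes "summable (\<lambda>n. (x n)\<^sup>2)" "summable (\<lambda>n. (y n)\<^sup>2)"
  shows "summable (\<lambda>n. \<bar>x n * y n\<bar>)"
    and "(\<Sum>n. \<bar>x n * y n\<bar>) \<le> sqrt (\<Sum>n. (x n)\<^sup>2) * sqrt (\<Sum>n. (y n)\<^sup>2)"
proof -
  have "\<bar>x n * y n\<bar> \<le> ((x n)\<^sup>2 + (y n)\<^sup>2) / 2" for n
  proof -
    have "0 \<le> (\<bar>x n\<bar> - \<bar>y n\<bar>)\<^sup>2" by simp
    thus ?thesis by (simp add: power2_eq_square abs_mult algebra_simps)
  qed
  thus sm: "summable (\<lambda>n. \<bar>x n * y n\<bar>)"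
    by (intro summable_comparison_test[OF _ summable_divide[OF summable_add[OF assms], where c=2]]) auto
  show "(\<Sum>n. \<bar>x n * y n\<bar>) \<le> sqrt (\<Sum>n. (x n)\<^sup>2) * sqrt (\<Sum>n. (y n)\<^sup>2)"
  proof (rule suminf_le_const[OF sm])
    fix K
    have "(\<Sum>n<K. \<bar>x n\<bar> * \<bar>y n\<bar>)\<^sup>2 \<le> (\<Sum>n<K. \<bar>x n\<bar>\<^sup>2) * (\<Sum>n<K. \<bar>y n\<bar>\<^sup>2)"
      by (rule Cauchy_Schwarz_ineq_sum)
    hence "(\<Sum>n<K. \<bar>x n * y n\<bar>) \<le> sqrt ((\<Sum>n<K. (x n)\<^sup>2) * (\<Sum>n<K. (y n)\<^sup>2))"
      by (simp add: abs_mult real_le_rsqrt)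
    also have "\<dots> \<le> sqrt ((\<Sum>n. (x n)\<^sup>2) * (\<Sum>n. (y n)\<^sup>2))"
      by (intro real_sqrt_le_mono mult_mono sum_le_suminf assms sum_nonneg suminf_nonneg) auto
    finally show "(\<Sum>n<K. \<bar>x n * y n\<bar>) \<le> sqrt (\<Sum>n. (x n)\<^sup>2) * sqrt (\<Sum>n. (y n)\<^sup>2)"
      by (simp add: real_sqrt_mult)
  qed
qed

lemma summable_exp_neg_mult_ln:
  assumes "p > 1"
  shows "summable (\<lambda>n. exp (- p * ln (real (Suc n))))"
proof -
  have "summable (\<lambda>n. real n powr (- p))" using assms by (simp add: summable_real_powr_iff)
  hence "summable (\<lambda>n. real (Suc n) powr (- p))" by (subst summable_Suc_iff)
  thus ?thesis by (simp add: powr_def mult_ac del: of_nat_Suc)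
qed

text \<open>The logarithm is absorbed by a power: \<open>ln n \<le> n powr d / d\<close> with \<open>d = (p - 1) / 4\<close>.\<close>

lemma summable_ln_squared_mult_exp_neg_mult_ln:
  assumes "p > 1"
  shows "summable (\<lambda>n. (ln (real (Suc n)))\<^sup>2 * exp (- p * ln (real (Suc n))))"
proof -
  define d where "d = (p - 1) / 4"
  have d0: "d > 0" using assms by (simp add: d_def)
  have pd: "p - 2 * d > 1" using assms unfolding d_def by (simp add: field_simps)
  have bnd: "norm ((ln (real (Suc n)))\<^sup>2 * exp (- p * ln (real (Suc n))))
               \<le> (1 / d\<^sup>2) * exp (- (p - 2 * d) * ln (real (Suc n)))" for n
  proof -
    define L where "L = ln (real (Suc n))"
    have L0: "L \<ge> 0" by (simp add: L_def)
    have "L \<le> real (Suc n) powr d / d" unfolding L_def by (rule ln_powr_bound) (use d0 in auto)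
    also have "real (Suc n) powr d = exp (d * L)" by (simp add: powr_def L_def mult_ac del: of_nat_Suc)
    finally have "L\<^sup>2 \<le> (exp (d * L) / d)\<^sup>2" using L0 by (intro power_mono) auto
    also have "\<dots> = exp (2 * d * L) / d\<^sup>2" by (simp add: power_divide exp_double[symmetric] mult_ac)
    finally have "L\<^sup>2 * exp (- p * L) \<le> exp (2 * d * L) / d\<^sup>2 * exp (- p * L)"
      by (intro mult_right_mono) auto
    also have "\<dots> = (1 / d\<^sup>2) * exp (- (p - 2 * d) * L)"
    proof -
      have "exp (2 * d * L) * exp (- p * L) = exp (- (p - 2 * d) * L)"
        by (subst exp_add[symmetric]) (simp add: algebra_simps)
      thus ?thesis by simp
    qed
    finally show ?thesis using L0 unfolding L_def by simp
  qed
  show ?thesis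
    using pd by (intro summable_comparison_test'[OF _ bnd] summable_mult summable_exp_neg_mult_ln) simp
qed

definition sum_sq_inv_powr :: "real \<Rightarrow> real" where
  "sum_sq_inv_powr \<sigma> = (\<Sum>n. (exp (- \<sigma> * ln (real (Suc n))))\<^sup>2)"

lemma summable_sq_inv_powr: "\<sigma> > 1/2 \<Longrightarrow> summable (\<lambda>n. (exp (- \<sigma> * ln (real (Suc n))))\<^sup>2)"
  using summable_exp_neg_mult_ln[of "2 * \<sigma>"] by (simp add: exp_double[symmetric] mult.assoc)

lemma sum_sq_inv_powr_nonneg: "\<sigma> > 1/2 \<Longrightarrow> sum_sq_inv_powr \<sigma> \<ge> 0"
  unfolding sum_sq_inv_powr_def by (intro suminf_nonneg summable_sq_inv_powr) auto

lemma summable_norm_dseries_H2: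
  assumes "a \<in> H2" "Re s > 1/2"
  shows "summable (\<lambda>n. cmod (a (Suc n) * inv_powr (Suc n) s))"
    and "(\<Sum>n. cmod (a (Suc n) * inv_powr (Suc n) s)) \<le> H2_norm a * sqrt (sum_sq_inv_powr (Re s))"
proof -
  have eq: "cmod (a (Suc n) * inv_powr (Suc n) s) = \<bar>cmod (a (Suc n)) * exp (- Re s * ln (real (Suc n)))\<bar>" for n
    by (simp add: norm_mult norm_inv_powr)
  note cs = Cauchy_Schwarz_suminf[OF assms(1)[unfolded H2_def, simplified] summable_sq_inv_powr[OF assms(2)]]
  show "summable (\<lambda>n. cmod (a (Suc n) * inv_powr (Suc n) s))" unfolding eq by (rule cs(1))
  show "(\<Sum>n. cmod (a (Suc n) * inv_powr (Suc n) s)) \<le> H2_norm a * sqrt (sum_sq_inv_powr (Re s))"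
    unfolding eq H2_norm_def sum_sq_inv_powr_def by (rule cs(2))
qed

lemma summable_dseries_H2:
  "a \<in> H2 \<Longrightarrow> Re s > 1/2 \<Longrightarrow> summable (\<lambda>n. a (Suc n) * inv_powr (Suc n) s)"
  by (rule summable_norm_cancel[OF summable_norm_dseries_H2(1)])

lemma norm_dseries_le_H2_norm:
  assumes "a \<in> H2" "Re s > 1/2"
  shows "cmod (dseries a s) \<le> H2_norm a * sqrt (sum_sq_inv_powr (Re s))"
  unfolding dseries_eq_suminf_inv_powr
  using summable_norm[OF summable_norm_dseries_H2(1)[OF assms]] summable_norm_dseries_H2(2)[OF assms]
  by linarith

text \<open>Termwise differentiation, justified by the Weierstrass test on \<open>Re z > \<sigma>\<^sub>0\<close> with
  \<open>\<sigma>\<^sub>0\<close> halfway between \<open>1/2\<close> and \<open>Re w\<close>.\<close>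

lemma deriv_dseries_H2:
  assumes a: "a \<in> H2" and w: "Re w > 1/2"
  shows "(\<lambda>n. a (Suc n) * - of_real (ln (real (Suc n))) * inv_powr (Suc n) w) sums deriv (dseries a) w"
proof -
  define \<sigma>0 where "\<sigma>0 = (1/2 + Re w) / 2"
  have s0: "\<sigma>0 > 1/2" "\<sigma>0 < Re w" using w by (simp_all add: \<sigma>0_def)
  define S where "S = {z. Re z > \<sigma>0}"
  define f where "f n z = a (Suc n) * inv_powr (Suc n) z" for n z
  define f' where "f' n z = a (Suc n) * - of_real (ln (real (Suc n))) * inv_powr (Suc n) z" for n z
  define M where "M n = cmod (a (Suc n)) * (ln (real (Suc n)) * exp (- \<sigma>0 * ln (real (Suc n))))" for n
  have der: "(f n has_field_derivative f' n z) (at z within S)" for n z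
    unfolding f_def f'_def inv_powr_def by (auto intro!: derivative_eq_intros simp: mult_ac)
  have Mb: "norm (f' n z) \<le> M n" if "z \<in> S" for n z
  proof -
    have L0: "ln (real (Suc n)) \<ge> 0" by simp
    have "\<sigma>0 * ln (real (Suc n)) \<le> Re z * ln (real (Suc n))"
      using that L0 by (intro mult_right_mono) (auto simp: S_def)
    hence "ln (real (Suc n)) * exp (- Re z * ln (real (Suc n))) \<le> ln (real (Suc n)) * exp (- \<sigma>0 * ln (real (Suc n)))"
      by (intro mult_left_mono[OF _ L0]) simp
    hence "cmod (a (Suc n)) * (ln (real (Suc n)) * exp (- Re z * ln (real (Suc n)))) \<le> M n"
      unfolding M_def by (rule mult_left_mono) auto
    moreover have "norm (f' n z) = cmod (a (Suc n)) * (ln (real (Suc n)) * exp (- Re z * ln (real (Suc n))))"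
      unfolding f'_def using L0 by (simp add: norm_mult norm_inv_powr del: of_nat_Suc)
    ultimately show ?thesis by simp
  qed
  have "summable (\<lambda>n. (ln (real (Suc n)) * exp (- \<sigma>0 * ln (real (Suc n))))\<^sup>2)"
    using summable_ln_squared_mult_exp_neg_mult_ln[of "2 * \<sigma>0"] s0
    by (simp add: power_mult_distrib exp_double[symmetric] mult.assoc)
  from Cauchy_Schwarz_suminf(1)[OF a[unfolded H2_def, simplified] this]
  have Ms: "summable M" unfolding M_def by (simp add: abs_mult)
  have uc: "uniformly_convergent_on S (\<lambda>n x. \<Sum>i<n. f' i x)"
    by (rule Weierstrass_m_test'_ev[OF always_eventually Ms]) (use Mb in auto)
  have wS: "w \<in> S" using s0 by (simp add: S_def)
  have "open S" "convex S" unfolding S_def by (simp_all add: open_halfspace_Re_gt convex_halfspace_Re_gt)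
  with wS have intS: "w \<in> interior S" by (simp add: interior_open)
  have sw: "summable (\<lambda>n. f n w)" unfolding f_def using summable_dseries_H2[OF a w] .
  note hs = has_field_derivative_series'[OF \<open>convex S\<close> der uc wS sw]
  have "((\<lambda>x. \<Sum>n. f n x) has_field_derivative (\<Sum>n. f' n w)) (at w)"
    using hs(2)[OF intS] .
  moreover have "(\<lambda>x. \<Sum>n. f n x) = dseries a"
    by (rule ext) (simp add: f_def dseries_eq_suminf_inv_powr)
  ultimately have "deriv (dseries a) w = (\<Sum>n. f' n w)" by (simp add: DERIV_imp_deriv)
  moreover have "summable (\<lambda>n. f' n w)"
    using summable_comparison_test'[OF Ms, of 0 "\<lambda>n. f' n w"] Mb[OF wS] by simp
  ultimately show ?thesis unfolding f'_def by (simp add: sums_iff)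
qed
lemma H2_partial_sums_le:
  assumes "a \<in> H2"
  shows "(\<Sum>n<K. (cmod (a (Suc n)))\<^sup>2) \<le> (H2_norm a)\<^sup>2"
  using assms sum_le_suminf[of "\<lambda>n. (cmod (a (Suc n)))\<^sup>2" "{..<K}"]
  by (simp add: H2_norm_squared H2_def)

lemma H2_suminf_combination:
  fixes v :: "nat \<Rightarrow> nat \<Rightarrow> complex" and w :: "nat \<Rightarrow> complex" and r :: "nat \<Rightarrow> real"
  assumes v: "\<And>k. v k \<in> H2" and vr: "\<And>k. H2_norm (v k) \<le> r k"
    and ws: "summable (\<lambda>k. cmod (w k) * r k)"
  shows "summable (\<lambda>k. w k * v k (Suc n))"
    and "(\<lambda>m. \<Sum>k. w k * v k m) \<in> H2"
    and "H2_norm (\<lambda>m. \<Sum>k. w k * v k m) \<le> (\<Sum>k. cmod (w k) * r k)"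
proof -
  define S where "S = (\<Sum>k. cmod (w k) * r k)"
  have r0: "r k \<ge> 0" for k using H2_norm_nonneg[OF v] vr order_trans by blast
  have S0: "S \<ge> 0" unfolding S_def by (intro suminf_nonneg ws) (simp add: r0)
  have vb: "(\<Sum>n<K. (cmod (v k (Suc n)))\<^sup>2) \<le> (r k)\<^sup>2" for k K
  proof -
    have "(H2_norm (v k))\<^sup>2 \<le> (r k)\<^sup>2" by (intro power_mono vr H2_norm_nonneg v)
    with H2_partial_sums_le[OF v] show ?thesis by (rule order_trans)
  qed
  have v_le: "cmod (v k (Suc n)) \<le> r k" for k n
  proof -
    have "(cmod (v k (Suc n)))\<^sup>2 \<le> (\<Sum>i<Suc n. (cmod (v k (Suc i)))\<^sup>2)"
      by (rule member_le_sum[where f = "\<lambda>i. (cmod (v k (Suc i)))\<^sup>2" and i = n]) auto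
    also have "\<dots> \<le> (r k)\<^sup>2" by (rule vb)
    finally show ?thesis using r0[of k] by (simp add: abs_le_square_iff power2_le_iff_abs_le)
  qed
  show sm: "summable (\<lambda>k. w k * v k (Suc n))" for n
    by (rule summable_comparison_test'[OF ws, of 0]) (simp add: norm_mult mult_left_mono v_le)
  define u where "u n = (\<Sum>k. w k * v k (Suc n))" for n
  define F where "F N n = (\<Sum>k<N. w k * v k (Suc n))" for N n
  have FL: "L2_set (\<lambda>n. cmod (F N n)) {..<K} \<le> (\<Sum>k<N. cmod (w k) * r k)" for N K
  proof (induction N)
    case 0 thus ?case by (simp add: F_def L2_set_def)
  next
    case (Suc N)
    have "L2_set (\<lambda>n. cmod (F (Suc N) n)) {..<K} \<le> L2_set (\<lambda>n. cmod (F N n) + cmod (w N * v N (Suc n))) {..<K}"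
      by (rule L2_set_mono) (auto simp: F_def norm_triangle_ineq)
    also have "\<dots> \<le> L2_set (\<lambda>n. cmod (F N n)) {..<K} + L2_set (\<lambda>n. cmod (w N * v N (Suc n))) {..<K}"
      by (rule L2_set_triangle_ineq)
    also have "L2_set (\<lambda>n. cmod (w N * v N (Suc n))) {..<K} = cmod (w N) * L2_set (\<lambda>n. cmod (v N (Suc n))) {..<K}"
      by (simp add: L2_set_right_distrib norm_mult)
    also have "L2_set (\<lambda>n. cmod (v N (Suc n))) {..<K} \<le> r N"
      unfolding L2_set_def using vb[of N K] r0[of N] by (simp add: real_sqrt_le_iff real_le_lsqrt)
    hence "cmod (w N) * L2_set (\<lambda>n. cmod (v N (Suc n))) {..<K} \<le> cmod (w N) * r N"
      by (intro mult_left_mono) auto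
    finally show ?case using Suc.IH by simp
  qed
  have uL: "L2_set (\<lambda>n. cmod (u n)) {..<K} \<le> S" for K
  proof (rule LIMSEQ_le_const2)
    show "(\<lambda>N. L2_set (\<lambda>n. cmod (F N n)) {..<K}) \<longlonglongrightarrow> L2_set (\<lambda>n. cmod (u n)) {..<K}"
      unfolding L2_set_def F_def u_def by (intro tendsto_intros summable_LIMSEQ sm)
    have "L2_set (\<lambda>n. cmod (F N n)) {..<K} \<le> S" for N
      using FL[of N K] sum_le_suminf[OF ws, of "{..<N}"] r0 unfolding S_def by (force intro: order_trans)
    thus "\<exists>N. \<forall>n\<ge>N. L2_set (\<lambda>n'. cmod (F n n')) {..<K} \<le> S" by blast
  qed
  have "(\<Sum>n<K. (cmod (u n))\<^sup>2) \<le> S\<^sup>2" for K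
  proof -
    have "sqrt (\<Sum>n<K. (cmod (u n))\<^sup>2) \<le> S" using uL[of K] by (simp add: L2_set_def)
    thus ?thesis using S0 by (simp add: real_sqrt_le_iff sqrt_le_D real_sqrt_le_mono)
  qed
  note bounded = H2_of_partial_sums_bounded[of "\<lambda>m. \<Sum>k. w k * v k m", OF this[unfolded u_def]]
  show "(\<lambda>m. \<Sum>k. w k * v k m) \<in> H2" by (rule bounded(1))
  have "H2_norm (\<lambda>m. \<Sum>k. w k * v k m) \<le> S"
    using bounded(2) S0 by (rule power2_le_imp_le)
  thus "H2_norm (\<lambda>m. \<Sum>k. w k * v k m) \<le> (\<Sum>k. cmod (w k) * r k)" by (simp only: S_def)
qed

lemma dseries_suminf_combination:
  fixes v :: "nat \<Rightarrow> nat \<Rightarrow> complex" and w :: "nat \<Rightarrow> complex" and r :: "nat \<Rightarrow> real"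
  assumes v: "\<And>k. v k \<in> H2" and vr: "\<And>k. H2_norm (v k) \<le> r k"
    and ws: "summable (\<lambda>k. cmod (w k) * r k)" and s: "Re s > 1/2"
  shows "(\<lambda>k. w k * dseries (v k) s) sums dseries (\<lambda>m. \<Sum>k. w k * v k m) s"
proof -
  define b where "b m = (\<Sum>k. w k * v k m)" for m
  define T where "T N = (\<Sum>j. cmod (w (j + N)) * r (j + N))" for N
  have T_tendsto: "T \<longlonglongrightarrow> 0"
  proof -
    have "T = (\<lambda>N. (\<Sum>k. cmod (w k) * r k) - (\<Sum>k<N. cmod (w k) * r k))"
      using suminf_split_initial_segment[OF ws] unfolding T_def by (intro ext) (simp add: algebra_simps)
    moreover have "(\<lambda>N. (\<Sum>k. cmod (w k) * r k) - (\<Sum>k<N. cmod (w k) * r k)) \<longlonglongrightarrow> 0"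
      using tendsto_diff[OF tendsto_const summable_LIMSEQ[OF ws], of "\<Sum>k. cmod (w k) * r k"] by simp
    ultimately show ?thesis by simp
  qed
  have tail: "cmod (dseries b s - (\<Sum>k<N. w k * dseries (v k) s)) \<le> T N * sqrt (sum_sq_inv_powr (Re s))" for N
  proof -
    define u where "u m = (\<Sum>j. w (j + N) * v (j + N) m)" for m
    have wsN: "summable (\<lambda>j. cmod (w (j + N)) * r (j + N))"
      using summable_ignore_initial_segment[OF ws, of N] .
    note tail_comb = H2_suminf_combination[OF v vr wsN]
    have u: "u \<in> H2" "H2_norm u \<le> T N" using tail_comb(2,3) unfolding u_def T_def .
    have split: "b (Suc n) = u (Suc n) + (\<Sum>k<N. w k * v k (Suc n))" for n
      unfolding b_def u_def
      using suminf_split_initial_segment[OF H2_suminf_combination(1)[OF v vr ws, of n], of N] by simp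
    have su: "summable (\<lambda>n. u (Suc n) * inv_powr (Suc n) s)" by (rule summable_dseries_H2[OF u(1) s])
    have sv: "summable (\<lambda>n. v k (Suc n) * inv_powr (Suc n) s)" for k by (rule summable_dseries_H2[OF v s])
    have "dseries b s = (\<Sum>n. u (Suc n) * inv_powr (Suc n) s + (\<Sum>k<N. w k * (v k (Suc n) * inv_powr (Suc n) s)))"
      unfolding dseries_eq_suminf_inv_powr split by (simp add: distrib_right sum_distrib_right mult.assoc)
    also have "\<dots> = dseries u s + (\<Sum>n. \<Sum>k<N. w k * (v k (Suc n) * inv_powr (Suc n) s))"
      unfolding dseries_eq_suminf_inv_powr using su sv
      by (intro suminf_add[symmetric] summable_sum summable_mult) auto
    also have "(\<Sum>n. \<Sum>k<N. w k * (v k (Suc n) * inv_powr (Suc n) s)) = (\<Sum>k<N. w k * dseries (v k) s)"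
      unfolding dseries_eq_suminf_inv_powr using sv
      by (subst suminf_sum) (auto intro: summable_mult simp: suminf_mult)
    finally have "dseries b s - (\<Sum>k<N. w k * dseries (v k) s) = dseries u s" by simp
    also have "cmod \<dots> \<le> H2_norm u * sqrt (sum_sq_inv_powr (Re s))"
      by (rule norm_dseries_le_H2_norm[OF u(1) s])
    also have "\<dots> \<le> T N * sqrt (sum_sq_inv_powr (Re s))"
      using u(2) sum_sq_inv_powr_nonneg[OF s] by (intro mult_right_mono) auto
    finally show ?thesis .
  qed
  have "(\<lambda>N. dseries b s - (\<Sum>k<N. w k * dseries (v k) s)) \<longlonglongrightarrow> 0"
  proof (rule Lim_null_comparison)
    show "\<forall>\<^sub>F N in sequentially. norm (dseries b s - (\<Sum>k<N. w k * dseries (v k) s)) \<le> T N * sqrt (sum_sq_inv_powr (Re s))"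
      using tail by simp
    show "(\<lambda>N. T N * sqrt (sum_sq_inv_powr (Re s))) \<longlonglongrightarrow> 0"
      using tendsto_mult_left_zero[OF T_tendsto] .
  qed
  from tendsto_diff[OF tendsto_const this, of "dseries b s"]
  show ?thesis unfolding sums_def b_def by simp
qed

section \<open>Coefficients of exp (- lam * \<Phi>)\<close>

definition exp_tail :: "real \<Rightarrow> nat \<Rightarrow> real" where
  "exp_tail a J = (\<Sum>n. a ^ (n + J) / fact (n + J))"

lemma norm_exp_minus_taylor_le:
  fixes z :: complex
  assumes "cmod z \<le> a"
  shows "cmod (exp z - (\<Sum>j<J. z ^ j /\<^sub>R fact j)) \<le> exp_tail a J"
proof -
  have sz: "summable (\<lambda>n. z ^ n /\<^sub>R fact n)" using exp_converges[of z] by (simp add: sums_iff)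
  have sa: "summable (\<lambda>n. a ^ n / fact n)" using exp_converges[of a] by (simp add: sums_iff divide_inverse mult_ac)
  have "exp z = (\<Sum>n. z ^ (n + J) /\<^sub>R fact (n + J)) + (\<Sum>j<J. z ^ j /\<^sub>R fact j)"
    using suminf_split_initial_segment[OF sz, of J] exp_converges[of z] by (simp add: sums_iff)
  hence "exp z - (\<Sum>j<J. z ^ j /\<^sub>R fact j) = (\<Sum>n. z ^ (n + J) /\<^sub>R fact (n + J))" by simp
  also have "cmod \<dots> \<le> exp_tail a J" unfolding exp_tail_def
  proof (rule norm_suminf_le)
    show "summable (\<lambda>n. a ^ (n + J) / fact (n + J))"
      using summable_ignore_initial_segment[OF sa, of J] .
    fix n
    have "cmod (z ^ (n + J) /\<^sub>R fact (n + J)) = cmod z ^ (n + J) / fact (n + J)"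
      by (simp add: norm_power divide_inverse mult.commute)
    also have "\<dots> \<le> a ^ (n + J) / fact (n + J)"
      using assms by (intro divide_right_mono power_mono) auto
    finally show "cmod (z ^ (n + J) /\<^sub>R fact (n + J)) \<le> a ^ (n + J) / fact (n + J)" .
  qed
  finally show ?thesis .
qed

lemma exp_tail_tendsto_0: "(\<lambda>J. exp_tail a J) \<longlonglongrightarrow> 0"
proof -
  have sa: "(\<lambda>n. a ^ n / fact n) sums exp a" using exp_converges[of a] by (simp add: divide_inverse mult_ac)
  have eq: "exp_tail a J = exp a - (\<Sum>j<J. a ^ j / fact j)" for J
    using suminf_split_initial_segment[OF sums_summable[OF sa], of J] sa unfolding exp_tail_def by (simp add: sums_iff)
  have "(\<lambda>J. exp a - (\<Sum>j<J. a ^ j / fact j)) \<longlonglongrightarrow> exp a - exp a"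
    using sa unfolding sums_def by (intro tendsto_intros)
  thus ?thesis unfolding eq by simp
qed

lemma exp_tail_nonneg:
  assumes "a \<ge> 0" shows "exp_tail a J \<ge> 0"
proof -
  have sa: "summable (\<lambda>n. a ^ n / fact n)" using exp_converges[of a] by (simp add: sums_iff divide_inverse mult_ac)
  show ?thesis unfolding exp_tail_def
    by (rule suminf_nonneg[OF summable_ignore_initial_segment[OF sa, of J]]) (use assms in simp)
qed

definition dpartial_nonconst :: "(nat \<Rightarrow> complex) \<Rightarrow> nat \<Rightarrow> complex \<Rightarrow> complex" where
  "dpartial_nonconst c N s = (\<Sum>k\<in>{2..N}. c k * inv_powr k s)"

lemma dpartial_eq_const_plus_nonconst:
  assumes "N \<ge> 1"
  shows "dpartial c N s = c 1 + dpartial_nonconst c N s"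
proof -
  have "{1..N} = insert 1 {2..N}" using assms by auto
  thus ?thesis unfolding dpartial_eq_sum_inv_powr dpartial_nonconst_def by simp
qed

definition nonconst_majorant :: "(nat \<Rightarrow> complex) \<Rightarrow> nat \<Rightarrow> real \<Rightarrow> real" where
  "nonconst_majorant c N \<eta> = (\<Sum>k\<in>{2..N}. cmod (c k) * exp (- \<eta> * ln (real k)))"

lemma norm_dpartial_nonconst_le: "cmod (dpartial_nonconst c N s) \<le> nonconst_majorant c N (Re s)"
  unfolding dpartial_nonconst_def nonconst_majorant_def
  by (rule order_trans[OF norm_sum]) (simp add: norm_mult norm_inv_powr)

definition power_coeff :: "(nat \<Rightarrow> complex) \<Rightarrow> nat set \<Rightarrow> nat \<Rightarrow> nat \<Rightarrow> complex" where
  "power_coeff c S j m = (\<Sum>g\<in>{g \<in> PiE {..<j} (\<lambda>_. S). prod g {..<j} = m}. \<Prod>i<j. c (g i))"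

lemma PiE_prod_bounds:
  assumes "g \<in> PiE {..<j} (\<lambda>_. {2..N::nat})"
  shows "2 ^ j \<le> prod g {..<j}" "prod g {..<j} \<le> N ^ j"
proof -
  have "(\<Prod>i<j. (2::nat)) \<le> prod g {..<j}"
    using assms by (intro prod_mono) (auto simp: PiE_def Pi_def)
  thus "2 ^ j \<le> prod g {..<j}" by simp
  have "prod g {..<j} \<le> (\<Prod>i<j. N)"
    using assms by (intro prod_mono) (auto simp: PiE_def Pi_def)
  thus "prod g {..<j} \<le> N ^ j" by simp
qed

lemma power_dpartial_nonconst:
  assumes "N \<ge> 1" "j \<le> J"
  shows "dpartial_nonconst c N s ^ j = (\<Sum>m\<in>{1..N^J}. power_coeff c {2..N} j m * inv_powr m s)"
proof -
  define A where "A = PiE {..<j} (\<lambda>_::nat. {2..N})"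
  have finA: "finite A" unfolding A_def by (intro finite_PiE) auto
  have "dpartial_nonconst c N s ^ j = (\<Prod>i<j. \<Sum>k\<in>{2..N}. c k * inv_powr k s)" by (simp add: dpartial_nonconst_def)
  also have "\<dots> = (\<Sum>g\<in>A. \<Prod>i<j. c (g i) * inv_powr (g i) s)"
    unfolding A_def by (rule prod_sum_PiE) auto
  also have "\<dots> = (\<Sum>g\<in>A. (\<Prod>i<j. c (g i)) * inv_powr (prod g {..<j}) s)"
  proof (rule sum.cong[OF refl])
    fix g assume g: "g \<in> A"
    have "inv_powr (prod g {..<j}) s = (\<Prod>i<j. inv_powr (g i) s)"
      using g by (intro inv_powr_prod) (auto simp: A_def PiE_def Pi_def)
    thus "(\<Prod>i<j. c (g i) * inv_powr (g i) s) = (\<Prod>i<j. c (g i)) * inv_powr (prod g {..<j}) s"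
      by (simp add: prod.distrib)
  qed
  also have "\<dots> = (\<Sum>m\<in>{1..N^J}. \<Sum>g\<in>{g \<in> A. prod g {..<j} = m}. (\<Prod>i<j. c (g i)) * inv_powr (prod g {..<j}) s)"
  proof (rule sum.group[symmetric, OF finA])
    show "(\<lambda>g. prod g {..<j}) ` A \<subseteq> {1..N^J}"
    proof
      fix m assume "m \<in> (\<lambda>g. prod g {..<j}) ` A"
      then obtain g where g: "g \<in> A" "m = prod g {..<j}" by auto
      have m2: "2 ^ j \<le> m" "m \<le> N ^ j" using PiE_prod_bounds[of g j N] g by (auto simp: A_def)
      moreover have "1 \<le> m" using m2(1) by (metis le_trans one_le_numeral one_le_power)
      moreover have "N ^ j \<le> N ^ J" using assms by (intro power_increasing) auto
      ultimately show "m \<in> {1..N^J}" by auto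
    qed
  qed simp
  also have "\<dots> = (\<Sum>m\<in>{1..N^J}. power_coeff c {2..N} j m * inv_powr m s)"
    unfolding power_coeff_def A_def sum_distrib_right by (intro sum.cong refl) auto
  finally show ?thesis .
qed

lemma power_coeff_eq_0_if_less:
  assumes "m < 2 ^ j"
  shows "power_coeff c {2..N} j m = 0"
proof -
  have E: "{g \<in> PiE {..<j} (\<lambda>_. {2..N}). prod g {..<j} = m} = {}"
  proof -
    have False if "g \<in> PiE {..<j} (\<lambda>_. {2..N})" "prod g {..<j} = m" for g
    proof -
      have "2 ^ j \<le> m" using PiE_prod_bounds(1)[OF that(1)] that(2) by simp
      thus False using assms by simp
    qed
    thus ?thesis by blast
  qed
  show ?thesis unfolding power_coeff_def E by simp
qed

lemma power_coeff_restrict: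
  assumes "1 \<le> m" "m \<le> N"
  shows "power_coeff c {2..N} j m = power_coeff c {2..m} j m"
proof -
  have key: "(g \<in> PiE {..<j} (\<lambda>_. {2..N})) = (g \<in> PiE {..<j} (\<lambda>_. {2..m}))"
    if p: "prod g {..<j} = m" for g
  proof -
    have le: "g i \<le> m" if "i < j" for i
    proof -
      have "g i dvd prod g {..<j}" using that by (intro dvd_prodI) auto
      thus ?thesis using p assms(1) by (auto intro: dvd_imp_le)
    qed
    have le2: "g i \<le> N" if "i < j" for i using le[OF that] assms(2) by simp
    show ?thesis using le le2 by (auto simp: PiE_def Pi_def)
  qed
  have E: "{g \<in> PiE {..<j} (\<lambda>_. {2..N}). prod g {..<j} = m} = {g \<in> PiE {..<j} (\<lambda>_. {2..m}). prod g {..<j} = m}"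
    using key by blast
  show ?thesis unfolding power_coeff_def E ..
qed

definition exp_taylor :: "(nat \<Rightarrow> complex) \<Rightarrow> real \<Rightarrow> nat \<Rightarrow> nat \<Rightarrow> complex \<Rightarrow> complex" where
  "exp_taylor c lam N J s = exp (- of_real lam * c 1) * (\<Sum>j<J. (- of_real lam * dpartial_nonconst c N s) ^ j /\<^sub>R fact j)"

definition exp_taylor_coeff :: "(nat \<Rightarrow> complex) \<Rightarrow> real \<Rightarrow> nat \<Rightarrow> nat \<Rightarrow> nat \<Rightarrow> complex" where
  "exp_taylor_coeff c lam N J m = exp (- of_real lam * c 1) * (\<Sum>j<J. ((- of_real lam) ^ j /\<^sub>R fact j) * power_coeff c {2..N} j m)"

lemma exp_taylor_eq_sum_coeff:
  assumes "N \<ge> 1"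
  shows "exp_taylor c lam N J s = (\<Sum>m\<in>{1..N^J}. exp_taylor_coeff c lam N J m * inv_powr m s)"
proof -
  have "exp_taylor c lam N J s = exp (- of_real lam * c 1) * (\<Sum>j<J. ((- of_real lam) ^ j /\<^sub>R fact j) * dpartial_nonconst c N s ^ j)"
    unfolding exp_taylor_def power_mult_distrib by (simp add: scaleR_conv_of_real mult_ac)
  also have "\<dots> = exp (- of_real lam * c 1) * (\<Sum>j<J. ((- of_real lam) ^ j /\<^sub>R fact j) * (\<Sum>m\<in>{1..N^J}. power_coeff c {2..N} j m * inv_powr m s))"
    by (intro arg_cong2[where f="(*)"] sum.cong refl) (subst power_dpartial_nonconst[OF assms], auto)
  also have "\<dots> = (\<Sum>m\<in>{1..N^J}. exp_taylor_coeff c lam N J m * inv_powr m s)"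
    unfolding exp_taylor_coeff_def sum_distrib_left sum_distrib_right
    by (subst sum.swap) (simp add: mult_ac)
  finally show ?thesis .
qed

lemma exp_taylor_tendsto:
  assumes "N \<ge> 1"
  shows "(\<lambda>J. exp_taylor c lam N J s) \<longlonglongrightarrow> exp (- of_real lam * dpartial c N s)"
proof -
  have "(\<lambda>J. exp_taylor c lam N J s) \<longlonglongrightarrow> exp (- of_real lam * c 1) * exp (- of_real lam * dpartial_nonconst c N s)"
    unfolding exp_taylor_def using exp_converges[of "- of_real lam * dpartial_nonconst c N s"] unfolding sums_def
    by (intro tendsto_intros)
  also have "exp (- of_real lam * c 1) * exp (- of_real lam * dpartial_nonconst c N s) = exp (- of_real lam * c 1 + - of_real lam * dpartial_nonconst c N s)"
    by (rule exp_add[symmetric])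
  also have "\<dots> = exp (- of_real lam * dpartial c N s)"
    using assms by (simp add: dpartial_eq_const_plus_nonconst distrib_left)
  finally show ?thesis .
qed

text \<open>The coefficient of \<open>m powr (- s)\<close> in \<open>exp (- lam * dseries c s)\<close>: a product of \<open>j\<close>
  factors from \<open>{2..}\<close> equal to \<open>m\<close> has all factors in \<open>{2..m}\<close> and \<open>2 ^ j \<le> m\<close>, so
  truncating at \<open>{2..m}\<close> and \<open>j < m\<close> loses nothing.\<close>

definition exp_coeff :: "(nat \<Rightarrow> complex) \<Rightarrow> real \<Rightarrow> nat \<Rightarrow> complex" where
  "exp_coeff c lam m = exp (- of_real lam * c 1) * (\<Sum>j<m. ((- of_real lam) ^ j /\<^sub>R fact j) * power_coeff c {2..m} j m)"

lemma exp_taylor_coeff_eq_exp_coeff: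
  assumes "1 \<le> m" "m \<le> N" "m \<le> J"
  shows "exp_taylor_coeff c lam N J m = exp_coeff c lam m"
proof -
  have "(\<Sum>j<J. ((- of_real lam) ^ j /\<^sub>R fact j) * power_coeff c {2..N} j m) = (\<Sum>j<m. ((- of_real lam) ^ j /\<^sub>R fact j) * power_coeff c {2..N} j m)"
  proof (rule sum.mono_neutral_right)
    show "\<forall>j\<in>{..<J} - {..<m}. ((- of_real lam) ^ j /\<^sub>R fact j) * power_coeff c {2..N} j m = 0"
    proof
      fix j assume "j \<in> {..<J} - {..<m}"
      hence "m \<le> j" by auto
      hence "m < 2 ^ j" using less_exp[of j] by linarith
      thus "((- of_real lam) ^ j /\<^sub>R fact j) * power_coeff c {2..N} j m = 0" by (simp add: power_coeff_eq_0_if_less)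
    qed
  qed (use assms in auto)
  also have "\<dots> = (\<Sum>j<m. ((- of_real lam) ^ j /\<^sub>R fact j) * power_coeff c {2..m} j m)"
    by (intro sum.cong refl) (subst power_coeff_restrict[OF assms(1,2)], rule refl)
  finally show ?thesis unfolding exp_taylor_coeff_def exp_coeff_def by simp
qed

section \<open>Symbols mapping into a smaller half-plane\<close>

locale gap_symbol =
  fixes c :: "nat \<Rightarrow> complex" and \<epsilon> :: real
  assumes G0: "G0 c" and \<epsilon>_pos: "\<epsilon> > 0"
    and maps_into: "dseries c ` halfplane 0 \<subseteq> halfplane (1/2 + \<epsilon>)"
begin

definition close_on_line :: "nat \<Rightarrow> real \<Rightarrow> real \<Rightarrow> bool" where
  "close_on_line N \<eta> \<delta> \<longleftrightarrow>
     (\<forall>t. cmod (dpartial c N (of_real \<eta> + \<i> * of_real t) - dseries c (of_real \<eta> + \<i> * of_real t)) < \<delta>)"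

definition taylor_bound :: "real \<Rightarrow> nat \<Rightarrow> real \<Rightarrow> real \<Rightarrow> nat \<Rightarrow> real" where
  "taylor_bound lam N \<eta> \<delta> J =
     exp (- lam * (1/2 + \<epsilon> - \<delta>)) + exp (- lam * Re (c 1)) * exp_tail (lam * nonconst_majorant c N \<eta>) J"

lemma taylor_bound_nonneg: "lam \<ge> 0 \<Longrightarrow> taylor_bound lam N \<eta> \<delta> J \<ge> 0"
  unfolding taylor_bound_def nonconst_majorant_def
  by (intro add_nonneg_nonneg mult_nonneg_nonneg exp_tail_nonneg sum_nonneg) auto

lemma taylor_bound_tendsto: "(\<lambda>J. taylor_bound lam N \<eta> \<delta> J) \<longlonglongrightarrow> exp (- lam * (1/2 + \<epsilon> - \<delta>))"
  using tendsto_add[OF tendsto_const tendsto_mult[OF tendsto_const exp_tail_tendsto_0]]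
  unfolding taylor_bound_def by simp

lemma Re_dseries_gt: "Re s > 0 \<Longrightarrow> Re (dseries c s) > 1/2 + \<epsilon>"
  using maps_into by (auto simp: halfplane_def)

lemma dpartial_symbol_tendsto:
  assumes "Re s > 0"
  shows "(\<lambda>N. dpartial c N s) \<longlonglongrightarrow> dseries c s"
proof -
  have "uniform_limit (halfplane (Re s / 2)) (dpartial c) (dseries c) sequentially"
    using G0 assms unfolding G0_def by auto
  moreover have "s \<in> halfplane (Re s / 2)" using assms by (simp add: halfplane_def)
  ultimately show ?thesis by (rule tendsto_uniform_limitI)
qed

lemma eventually_close_on_line:
  assumes "\<eta> > 0" "\<delta> > 0"
  shows "\<forall>\<^sub>F N in sequentially. close_on_line N \<eta> \<delta>"
proof -
  have on_line: "of_real \<eta> + \<i> * of_real t \<in> halfplane (\<eta> / 2)" for t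
    using assms by (simp add: halfplane_def)
  have "uniform_limit (halfplane (\<eta> / 2)) (dpartial c) (dseries c) sequentially"
    using G0 assms unfolding G0_def by auto
  hence "\<forall>\<^sub>F N in sequentially. \<forall>x\<in>halfplane (\<eta> / 2). dist (dpartial c N x) (dseries c x) < \<delta>"
    using assms(2) unfolding uniform_limit_iff by blast
  thus ?thesis
    unfolding close_on_line_def by eventually_elim (use on_line in \<open>auto simp: dist_norm\<close>)
qed

text \<open>On a line where the partial sum is \<open>\<delta>\<close>-close to \<open>\<Phi>\<close>, \<open>Re (dpartial c N s) > 1/2 + \<epsilon> - \<delta>\<close>,
  which bounds the exponential; the Taylor polynomial differs from it by a Taylor tail.\<close>

lemma norm_exp_taylor_on_line_le:
  assumes "\<eta> > 0" "lam \<ge> 0" "N \<ge> 1" "close_on_line N \<eta> \<delta>"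
  shows "cmod (exp_taylor c lam N J (of_real \<eta> + \<i> * of_real t)) \<le> taylor_bound lam N \<eta> \<delta> J"
proof -
  define s where "s = of_real \<eta> + \<i> * of_real t"
  have Res: "Re s = \<eta>" by (simp add: s_def)
  define E where "E = exp (- of_real lam * c 1)"
  define x where "x = - of_real lam * dpartial_nonconst c N s"
  define taylor where "taylor = (\<Sum>j<J. x ^ j /\<^sub>R fact j)"
  have ex: "exp (- of_real lam * dpartial c N s) = E * exp x"
    unfolding E_def x_def using assms(3)
    by (simp add: dpartial_eq_const_plus_nonconst distrib_left exp_add[symmetric])
  have "exp_taylor c lam N J s = exp (- of_real lam * dpartial c N s) + E * (taylor - exp x)"
    unfolding ex by (simp add: exp_taylor_def E_def x_def taylor_def algebra_simps)
  hence "cmod (exp_taylor c lam N J s) \<le> cmod (exp (- of_real lam * dpartial c N s)) + cmod (E * (taylor - exp x))"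
    by (simp only: norm_triangle_ineq)
  also have "cmod (exp (- of_real lam * dpartial c N s)) \<le> exp (- lam * (1/2 + \<epsilon> - \<delta>))"
  proof -
    have "Re (dseries c s) > 1/2 + \<epsilon>" using Re_dseries_gt assms(1) Res by simp
    moreover have "\<bar>Re (dpartial c N s - dseries c s)\<bar> < \<delta>"
      using assms(4) abs_Re_le_cmod[of "dpartial c N s - dseries c s"]
      unfolding close_on_line_def s_def by (meson le_less_trans)
    ultimately have "Re (dpartial c N s) \<ge> 1/2 + \<epsilon> - \<delta>" by auto
    hence "lam * (1/2 + \<epsilon> - \<delta>) \<le> lam * Re (dpartial c N s)" using assms(2) by (intro mult_left_mono)
    thus ?thesis by simp
  qed
  also have "cmod (E * (taylor - exp x)) \<le> exp (- lam * Re (c 1)) * exp_tail (lam * nonconst_majorant c N \<eta>) J"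
  proof -
    have "cmod x \<le> lam * nonconst_majorant c N \<eta>"
      using norm_dpartial_nonconst_le[of c N s] assms(2) Res by (simp add: x_def norm_mult mult_left_mono)
    hence "cmod (exp x - taylor) \<le> exp_tail (lam * nonconst_majorant c N \<eta>) J"
      unfolding taylor_def by (rule norm_exp_minus_taylor_le)
    moreover have "cmod E = exp (- lam * Re (c 1))" by (simp add: E_def)
    ultimately show ?thesis by (simp add: norm_mult norm_minus_commute mult_left_mono)
  qed
  finally show ?thesis unfolding s_def taylor_bound_def by simp
qed

lemma exp_taylor_coeff_weighted_sq_sum_le:
  assumes "\<eta> > 0" "lam \<ge> 0" "N \<ge> 1" "close_on_line N \<eta> \<delta>"
  shows "(\<Sum>m\<in>{1..N^J}. (cmod (exp_taylor_coeff c lam N J m) * exp (- \<eta> * ln (real m)))\<^sup>2)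
           \<le> (taylor_bound lam N \<eta> \<delta> J)\<^sup>2"
proof -
  define e where "e m = exp_taylor_coeff c lam N J m * of_real (exp (- \<eta> * ln (real m)))" for m
  define f where "f m = - ln (real m)" for m
  have inj: "inj_on f {1..N^J}" unfolding f_def by (rule inj_onI) auto
  have "(\<Sum>m\<in>{1..N^J}. (cmod (e m))\<^sup>2) \<le> (taylor_bound lam N \<eta> \<delta> J)\<^sup>2"
  proof (rule sum_sq_norm_le_if_exp_poly_bounded[OF _ inj])
    fix t
    have "(\<Sum>m\<in>{1..N^J}. e m * exp (\<i> * of_real (t * f m)))
            = (\<Sum>m\<in>{1..N^J}. exp_taylor_coeff c lam N J m * inv_powr m (of_real \<eta> + \<i> * of_real t))"
      unfolding e_def f_def inv_powr_vertical_line by (simp add: mult_ac)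
    also have "\<dots> = exp_taylor c lam N J (of_real \<eta> + \<i> * of_real t)"
      using assms(3) by (simp add: exp_taylor_eq_sum_coeff)
    finally show "cmod (\<Sum>m\<in>{1..N^J}. e m * exp (\<i> * of_real (t * f m))) \<le> taylor_bound lam N \<eta> \<delta> J"
      using norm_exp_taylor_on_line_le[OF assms] by simp
  qed simp
  thus ?thesis by (simp add: e_def norm_mult)
qed

lemma exp_coeff_weighted_sq_sum_le:
  assumes lam: "lam \<ge> 0" and eta: "\<eta> > 0" and del: "\<delta> > 0"
  shows "(\<Sum>m\<in>{1..K}. (cmod (exp_coeff c lam m) * exp (- \<eta> * ln (real m)))\<^sup>2) \<le> (exp (- lam * (1/2 + \<epsilon> - \<delta>)))\<^sup>2"
proof -
  obtain N where N: "N \<ge> 1" "N \<ge> K" "close_on_line N \<eta> \<delta>"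
    using eventually_conj[OF eventually_ge_at_top[of "max K 1"] eventually_close_on_line[OF eta del]]
    unfolding eventually_sequentially by auto
  have "(\<Sum>m\<in>{1..K}. (cmod (exp_coeff c lam m) * exp (- \<eta> * ln (real m)))\<^sup>2) \<le> (taylor_bound lam N \<eta> \<delta> J)\<^sup>2"
    if J: "J \<ge> max K 1" for J
  proof -
    have "N \<le> N ^ J" using power_increasing[of 1 J N] J N by simp
    have "(\<Sum>m\<in>{1..K}. (cmod (exp_coeff c lam m) * exp (- \<eta> * ln (real m)))\<^sup>2)
            = (\<Sum>m\<in>{1..K}. (cmod (exp_taylor_coeff c lam N J m) * exp (- \<eta> * ln (real m)))\<^sup>2)"
      using N J by (intro sum.cong refl) (simp add: exp_taylor_coeff_eq_exp_coeff)
    also have "\<dots> \<le> (\<Sum>m\<in>{1..N^J}. (cmod (exp_taylor_coeff c lam N J m) * exp (- \<eta> * ln (real m)))\<^sup>2)"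
      using N \<open>N \<le> N ^ J\<close> by (intro sum_mono2) auto
    also have "\<dots> \<le> (taylor_bound lam N \<eta> \<delta> J)\<^sup>2"
      by (rule exp_taylor_coeff_weighted_sq_sum_le[OF eta lam N(1,3)])
    finally show ?thesis .
  qed
  hence "\<exists>J0. \<forall>J\<ge>J0. (\<Sum>m\<in>{1..K}. (cmod (exp_coeff c lam m) * exp (- \<eta> * ln (real m)))\<^sup>2)
                        \<le> (taylor_bound lam N \<eta> \<delta> J)\<^sup>2"
    by blast
  thus ?thesis by (rule LIMSEQ_le_const[OF tendsto_power[OF taylor_bound_tendsto]])
qed

text \<open>Letting the weight exponent and the closeness tend to \<open>0\<close> together.\<close>

lemma exp_coeff_sq_sum_le:
  assumes lam: "lam \<ge> 0"
  shows "(\<Sum>m\<in>{1..K}. (cmod (exp_coeff c lam m))\<^sup>2) \<le> (exp (- lam * (1/2 + \<epsilon>)))\<^sup>2"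
proof (rule tendsto_le[OF trivial_limit_at_right_real])
  show "((\<lambda>\<eta>. (exp (- lam * (1/2 + \<epsilon> - \<eta>)))\<^sup>2) \<longlongrightarrow> (exp (- lam * (1/2 + \<epsilon>)))\<^sup>2) (at_right 0)"
    by (auto intro!: tendsto_eq_intros)
  show "((\<lambda>\<eta>. \<Sum>m\<in>{1..K}. (cmod (exp_coeff c lam m) * exp (- \<eta> * ln (real m)))\<^sup>2)
          \<longlongrightarrow> (\<Sum>m\<in>{1..K}. (cmod (exp_coeff c lam m))\<^sup>2)) (at_right 0)"
    by (auto intro!: tendsto_eq_intros)
  show "\<forall>\<^sub>F \<eta> in at_right 0. (\<Sum>m\<in>{1..K}. (cmod (exp_coeff c lam m) * exp (- \<eta> * ln (real m)))\<^sup>2)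
          \<le> (exp (- lam * (1/2 + \<epsilon> - \<eta>)))\<^sup>2"
    using eventually_at_right_less[of "0::real"]
    by eventually_elim (rule exp_coeff_weighted_sq_sum_le[OF lam])
qed

lemma exp_coeff_H2:
  assumes "lam \<ge> 0"
  shows "exp_coeff c lam \<in> H2" and "H2_norm (exp_coeff c lam) \<le> exp (- lam * (1/2 + \<epsilon>))"
proof -
  note bounded = H2_of_partial_sums_bounded[OF exp_coeff_sq_sum_le[OF assms, unfolded sum_atLeast1_atMost_eq]]
  show "exp_coeff c lam \<in> H2" by (rule bounded(1))
  show "H2_norm (exp_coeff c lam) \<le> exp (- lam * (1/2 + \<epsilon>))"
    using bounded(2) by (rule power2_le_imp_le) simp
qed

text \<open>The Taylor polynomial is a Dirichlet polynomial whose first \<open>N\<close> coefficients are those of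
  \<open>exp (- lam * \<Phi>)\<close>; its remaining terms are estimated by Cauchy-Schwarz, splitting
  \<open>m powr (- Re s)\<close> as \<open>m powr (- \<eta>) * m powr (- q)\<close>.\<close>

lemma norm_exp_taylor_minus_dpartial_exp_coeff_le:
  assumes lam: "lam \<ge> 0" and eta: "\<eta> > 0" and q: "q > 1/2" and sigma: "\<eta> + q = Re s"
    and N: "N \<ge> 1" "J \<ge> N" and close: "close_on_line N \<eta> \<delta>"
  shows "cmod (exp_taylor c lam N J s - dpartial (exp_coeff c lam) N s)
           \<le> taylor_bound lam N \<eta> \<delta> J * sqrt (sum_sq_inv_powr q - (\<Sum>n<N. (exp (- q * ln (real (Suc n))))\<^sup>2))"
proof -
  define w where "w r m = exp (- r * ln (real m))" for r m
  define e where "e m = exp_taylor_coeff c lam N J m" for m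
  define A where "A = {1..N^J}"
  define B where "B = {1..N}"
  have "N \<le> N ^ J" using power_increasing[of 1 J N] N by simp
  hence BA: "B \<subseteq> A" by (auto simp: A_def B_def)
  have finA: "finite A" by (simp add: A_def)
  have "dpartial (exp_coeff c lam) N s = (\<Sum>m\<in>B. e m * inv_powr m s)"
    unfolding dpartial_eq_sum_inv_powr B_def e_def
    using N by (intro sum.cong refl) (simp add: exp_taylor_coeff_eq_exp_coeff)
  moreover have "exp_taylor c lam N J s = (\<Sum>m\<in>A. e m * inv_powr m s)"
    unfolding A_def e_def using N by (simp add: exp_taylor_eq_sum_coeff)
  ultimately have "exp_taylor c lam N J s - dpartial (exp_coeff c lam) N s = (\<Sum>m\<in>A - B. e m * inv_powr m s)"
    by (simp only: sum_diff[OF finA BA])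
  hence "cmod (exp_taylor c lam N J s - dpartial (exp_coeff c lam) N s) \<le> (\<Sum>m\<in>A - B. cmod (e m * inv_powr m s))"
    by (simp add: norm_sum)
  also have "\<dots> = (\<Sum>m\<in>A - B. (cmod (e m) * w \<eta> m) * w q m)"
  proof (intro sum.cong refl)
    fix m
    have "w \<eta> m * w q m = exp (- Re s * ln (real m))"
      unfolding w_def sigma[symmetric] by (subst exp_add[symmetric]) (simp add: algebra_simps)
    thus "cmod (e m * inv_powr m s) = (cmod (e m) * w \<eta> m) * w q m"
      by (simp add: norm_mult norm_inv_powr mult.assoc)
  qed
  also have "\<dots> \<le> sqrt (\<Sum>m\<in>A - B. (cmod (e m) * w \<eta> m)\<^sup>2) * sqrt (\<Sum>m\<in>A - B. (w q m)\<^sup>2)"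
    by (rule Cauchy_Schwarz_ineq_sum_sqrt)
  also have "\<dots> \<le> taylor_bound lam N \<eta> \<delta> J * sqrt (sum_sq_inv_powr q - (\<Sum>n<N. (w q (Suc n))\<^sup>2))"
  proof (intro mult_mono)
    have "(\<Sum>m\<in>A - B. (cmod (e m) * w \<eta> m)\<^sup>2) \<le> (\<Sum>m\<in>A. (cmod (e m) * w \<eta> m)\<^sup>2)"
      using finA by (intro sum_mono2) auto
    also have "\<dots> \<le> (taylor_bound lam N \<eta> \<delta> J)\<^sup>2"
      using exp_taylor_coeff_weighted_sq_sum_le[OF eta lam N(1) close, of J]
      unfolding A_def e_def w_def .
    finally show "sqrt (\<Sum>m\<in>A - B. (cmod (e m) * w \<eta> m)\<^sup>2) \<le> taylor_bound lam N \<eta> \<delta> J"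
      using taylor_bound_nonneg[OF lam] by (simp add: real_sqrt_le_iff real_le_lsqrt)
    have "(\<Sum>m\<in>A - B. (w q m)\<^sup>2) = (\<Sum>m\<in>A. (w q m)\<^sup>2) - (\<Sum>m\<in>B. (w q m)\<^sup>2)"
      by (rule sum_diff[OF finA BA])
    also have "\<dots> = (\<Sum>n<N^J. (w q (Suc n))\<^sup>2) - (\<Sum>n<N. (w q (Suc n))\<^sup>2)"
      unfolding A_def B_def sum_atLeast1_atMost_eq ..
    also have "\<dots> \<le> sum_sq_inv_powr q - (\<Sum>n<N. (w q (Suc n))\<^sup>2)"
      unfolding sum_sq_inv_powr_def w_def
      using sum_le_suminf[OF summable_sq_inv_powr[OF q], of "{..<N^J}"] by simp
    finally show "sqrt (\<Sum>m\<in>A - B. (w q m)\<^sup>2) \<le> sqrt (sum_sq_inv_powr q - (\<Sum>n<N. (w q (Suc n))\<^sup>2))"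
      by simp
  qed (use taylor_bound_nonneg[OF lam] in \<open>auto intro: sum_nonneg\<close>)
  finally show ?thesis unfolding w_def .
qed

lemma dseries_exp_coeff:
  assumes lam: "lam \<ge> 0" and s: "Re s > 1/2"
  shows "dseries (exp_coeff c lam) s = exp (- of_real lam * dseries c s)"
proof -
  define \<eta> where "\<eta> = (Re s - 1/2) / 2"
  define q where "q = Re s - \<eta>"
  have eta: "\<eta> > 0" and q: "q > 1/2" and sigma: "\<eta> + q = Re s"
    using s by (simp_all add: \<eta>_def q_def field_simps)
  obtain N0 where N0: "\<And>N. N \<ge> N0 \<Longrightarrow> close_on_line N \<eta> 1"
    using eventually_close_on_line[OF eta, of 1] unfolding eventually_sequentially by auto
  define T where "T N = sum_sq_inv_powr q - (\<Sum>n<N. (exp (- q * ln (real (Suc n))))\<^sup>2)" for N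
  define B where "B = exp (- lam * (1/2 + \<epsilon> - 1))"
  have "T \<longlonglongrightarrow> sum_sq_inv_powr q - sum_sq_inv_powr q"
    unfolding T_def sum_sq_inv_powr_def
    by (intro tendsto_diff tendsto_const summable_LIMSEQ summable_sq_inv_powr q)
  hence T_tendsto: "(\<lambda>N. B * sqrt (T N)) \<longlonglongrightarrow> B * sqrt 0"
    by (intro tendsto_intros) simp
  have close: "cmod (exp (- of_real lam * dpartial c N s) - dpartial (exp_coeff c lam) N s) \<le> B * sqrt (T N)"
    if N: "N \<ge> max N0 1" for N
  proof (rule tendsto_le[OF trivial_limit_sequentially])
    show "(\<lambda>J. taylor_bound lam N \<eta> 1 J * sqrt (T N)) \<longlonglongrightarrow> B * sqrt (T N)"
      unfolding B_def by (intro tendsto_intros taylor_bound_tendsto)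
    show "(\<lambda>J. cmod (exp_taylor c lam N J s - dpartial (exp_coeff c lam) N s))
            \<longlonglongrightarrow> cmod (exp (- of_real lam * dpartial c N s) - dpartial (exp_coeff c lam) N s)"
      using N by (intro tendsto_intros exp_taylor_tendsto) simp
    have "N \<ge> 1" "close_on_line N \<eta> 1" using N N0 by auto
    note bound = norm_exp_taylor_minus_dpartial_exp_coeff_le[OF lam eta q sigma this(1) _ this(2)]
    show "\<forall>\<^sub>F J in sequentially. cmod (exp_taylor c lam N J s - dpartial (exp_coeff c lam) N s)
            \<le> taylor_bound lam N \<eta> 1 J * sqrt (T N)"
      using eventually_ge_at_top[of N] unfolding T_def by eventually_elim (rule bound)
  qed
  have "cmod (exp (- of_real lam * dseries c s) - dseries (exp_coeff c lam) s) \<le> B * sqrt 0"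
  proof (rule tendsto_le[OF trivial_limit_sequentially T_tendsto])
    have "Re s > 0" using s by simp
    thus "(\<lambda>N. cmod (exp (- of_real lam * dpartial c N s) - dpartial (exp_coeff c lam) N s))
            \<longlonglongrightarrow> cmod (exp (- of_real lam * dseries c s) - dseries (exp_coeff c lam) s)"
      by (intro tendsto_intros dpartial_symbol_tendsto dpartial_tendsto_dseries
          summable_dseries_H2 exp_coeff_H2 lam s)
    show "\<forall>\<^sub>F N in sequentially. cmod (exp (- of_real lam * dpartial c N s) - dpartial (exp_coeff c lam) N s)
            \<le> B * sqrt (T N)"
      using eventually_ge_at_top[of "max N0 1"] by eventually_elim (rule close)
  qed
  thus ?thesis by simp
qed

end

section \<open>The composed derivative\<close>

definition deriv_comp_coeff :: "(nat \<Rightarrow> complex) \<Rightarrow> (nat \<Rightarrow> complex) \<Rightarrow> nat \<Rightarrow> complex" where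
  "deriv_comp_coeff c a m =
     (\<Sum>k. a (Suc k) * - of_real (ln (real (Suc k))) * exp_coeff c (ln (real (Suc k))) m)"

context gap_symbol
begin

lemma deriv_comp_weights:
  assumes a: "a \<in> H2"
  shows "summable (\<lambda>k. cmod (a (Suc k) * - of_real (ln (real (Suc k)))) * exp (- ln (real (Suc k)) * (1/2 + \<epsilon>)))"
    and "(\<Sum>k. cmod (a (Suc k) * - of_real (ln (real (Suc k)))) * exp (- ln (real (Suc k)) * (1/2 + \<epsilon>)))
           \<le> H2_norm a * sqrt (\<Sum>n. (ln (real (Suc n)))\<^sup>2 * exp (- (1 + 2 * \<epsilon>) * ln (real (Suc n))))"
proof -
  define y where "y k = ln (real (Suc k)) * exp (- (1/2 + \<epsilon>) * ln (real (Suc k)))" for k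
  have y_sq: "(y k)\<^sup>2 = (ln (real (Suc k)))\<^sup>2 * exp (- (1 + 2 * \<epsilon>) * ln (real (Suc k)))" for k
    unfolding y_def by (simp add: power_mult_distrib exp_double[symmetric] algebra_simps)
  have "summable (\<lambda>k. (y k)\<^sup>2)"
    unfolding y_sq using summable_ln_squared_mult_exp_neg_mult_ln[of "1 + 2 * \<epsilon>"] \<epsilon>_pos by simp
  note cs = Cauchy_Schwarz_suminf[OF a[unfolded H2_def, simplified] this]
  have eq: "cmod (a (Suc k) * - of_real (ln (real (Suc k)))) * exp (- ln (real (Suc k)) * (1/2 + \<epsilon>))
              = \<bar>cmod (a (Suc k)) * y k\<bar>" for k
    by (simp add: y_def norm_mult abs_mult algebra_simps)
  show "summable (\<lambda>k. cmod (a (Suc k) * - of_real (ln (real (Suc k)))) * exp (- ln (real (Suc k)) * (1/2 + \<epsilon>)))"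
    unfolding eq by (rule cs(1))
  show "(\<Sum>k. cmod (a (Suc k) * - of_real (ln (real (Suc k)))) * exp (- ln (real (Suc k)) * (1/2 + \<epsilon>)))
          \<le> H2_norm a * sqrt (\<Sum>n. (ln (real (Suc n)))\<^sup>2 * exp (- (1 + 2 * \<epsilon>) * ln (real (Suc n))))"
    unfolding eq H2_norm_def y_sq[symmetric] by (rule cs(2))
qed

lemma deriv_comp_coeff_H2:
  assumes a: "a \<in> H2"
  shows "deriv_comp_coeff c a \<in> H2"
    and "H2_norm (deriv_comp_coeff c a)
           \<le> sqrt (\<Sum>n. (ln (real (Suc n)))\<^sup>2 * exp (- (1 + 2 * \<epsilon>) * ln (real (Suc n)))) * H2_norm a"
proof -
  have "ln (real (Suc k)) \<ge> 0" for k by simp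
  note comb = H2_suminf_combination[OF exp_coeff_H2[OF this] deriv_comp_weights(1)[OF a]]
  show "deriv_comp_coeff c a \<in> H2"
    unfolding deriv_comp_coeff_def by (rule comb(2))
  show "H2_norm (deriv_comp_coeff c a)
          \<le> sqrt (\<Sum>n. (ln (real (Suc n)))\<^sup>2 * exp (- (1 + 2 * \<epsilon>) * ln (real (Suc n)))) * H2_norm a"
    unfolding deriv_comp_coeff_def mult.commute[of _ "H2_norm a"]
    by (rule order_trans[OF comb(3) deriv_comp_weights(2)[OF a]])
qed

lemma dseries_deriv_comp_coeff:
  assumes a: "a \<in> H2" and s: "Re s > 1/2"
  shows "dseries (deriv_comp_coeff c a) s = deriv (dseries a) (dseries c s)"
proof -
  have ln_nonneg: "ln (real (Suc k)) \<ge> 0" for k by simp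
  have Re: "Re (dseries c s) > 1/2" using Re_dseries_gt[of s] \<epsilon>_pos s by simp
  have exp_eq: "inv_powr (Suc k) (dseries c s) = dseries (exp_coeff c (ln (real (Suc k)))) s" for k
    unfolding dseries_exp_coeff[OF ln_nonneg s] inv_powr_def by (simp add: mult.commute)
  have "(\<lambda>k. a (Suc k) * - of_real (ln (real (Suc k))) * dseries (exp_coeff c (ln (real (Suc k)))) s)
          sums deriv (dseries a) (dseries c s)"
    using deriv_dseries_H2[OF a Re] unfolding exp_eq .
  moreover have "(\<lambda>k. a (Suc k) * - of_real (ln (real (Suc k))) * dseries (exp_coeff c (ln (real (Suc k)))) s)
                   sums dseries (deriv_comp_coeff c a) s"
    unfolding deriv_comp_coeff_def
    by (rule dseries_suminf_combination[OF exp_coeff_H2[OF ln_nonneg] deriv_comp_weights(1)[OF a] s])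
  ultimately show ?thesis by (rule sums_unique2[symmetric])
qed

end

theorem theorem2p4:
  fixes c :: "nat \<Rightarrow> complex" and \<epsilon> :: real
  assumes "G0 c"
    and "\<epsilon> > 0"
    and "dseries c ` halfplane 0 \<subseteq> halfplane (1/2 + \<epsilon>)"
  shows "\<exists>C. \<forall>a\<in>H2. \<exists>b\<in>H2.
           (\<forall>s\<in>halfplane (1/2). dseries b s = deriv (dseries a) (dseries c s)) \<and>
           H2_norm b \<le> C * H2_norm a"
proof -
  interpret gap_symbol c \<epsilon> using assms by unfold_locales
  show ?thesis
  proof (intro exI ballI bexI conjI)
    fix a assume a: "a \<in> H2"
    show "deriv_comp_coeff c a \<in> H2" by (rule deriv_comp_coeff_H2(1)[OF a])
    show "H2_norm (deriv_comp_coeff c a)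
            \<le> sqrt (\<Sum>n. (ln (real (Suc n)))\<^sup>2 * exp (- (1 + 2 * \<epsilon>) * ln (real (Suc n)))) * H2_norm a"
      by (rule deriv_comp_coeff_H2(2)[OF a])
    show "dseries (deriv_comp_coeff c a) s = deriv (dseries a) (dseries c s)" if "s \<in> halfplane (1/2)" for s
      using dseries_deriv_comp_coeff[OF a] that by (simp add: halfplane_def)
  qed
qed

end
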